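(* Assume (A1) the parameter space $\Theta$ of $\theta=(B,\Omega)$ is compact (this holds, e.g., if the eigenvalues of $\Omega$ are bounded away from $0$ and $\infty$ and the coordinates of $B$ are bounded), and (A2) the variational parameter space $\Psi$ of $\psi=(m,s)$ is bounded. Let $M(\theta)=\mathbb E^\star[L(\theta;Y)]$, and assume that $M$ attains a finite global maximum at some $\bar\theta\in\Theta$ (possibly different from $\theta^\star$). Then $\widehat\theta^{\mathrm{ve}}\to\bar\theta$ (in probability) under $p_{\theta^\star}$ as $n\to\infty$.
   Context: Poisson-lognormal (PLN) model: for observations $i=1,\dots,n$, with covariates $x_i\in\mathbb R^m$ and offsets $o_i\in\mathbb R^p$, latent vectors $Z_i\sim\mathcal N_p(0,\Omega^{-1})$ are independent and, given $Z_i$, the coordinates of $Y_i\in\mathbb N^p$ are independent with $Y_{ij}\mid Z_i\sim\mathcal P(\exp(o_{ij}+x_i^\top B_j+Z_{ij}))$, where $B\in\mathcal M_{m,p}(\mathbb R)$ has columns $B_j$ and $\Omega$ is a symmetric positive definite $p\times p$ precision matrix. The parameter is $\theta=(B,\Omega)$; the data are generated under a true parameter $\theta^\star\in\Theta$, and $p_{\theta^\star}$, $\mathbb E^\star$ denote the distribution/expectation under it. Variational parameters are $\psi=(m,s)$ with $m\in\mathbb R^p$, $s\in(0,\infty)^p$. For a generic observation $Y$ with covariate $x$ and offset $o$, the single-observation ELBO is $J(\theta,\psi)=Y^\top(o+m+B^\top x)-\tilde a^\top 1_p-\sum_j\log(Y_j!)+\tfrac12\log|\Omega|-\tfrac12 m^\top\Omega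 m-\tfrac12\mathrm{diag}(\Omega)^\top s^2+\sum_j\log s_j+\tfrac p2$, where $\tilde a_j=\exp(o_j+x^\top B_j+m_j+s_j^2/2)$ and squares are elementwise; $J_i(\theta,\psi_i)$ denotes the same expression for observation $i$. The profiled objective is $L(\theta;Y)=\sup_{\psi\in\Psi}J(\theta,\psi)$, and the variational estimator $\widehat\theta^{\mathrm{ve}}$ is a maximizer over $\Theta$ of $\frac1n\sum_{i=1}^n L(\theta;Y_i)$ (equivalently, the $\theta$-part of a joint maximizer of $\sum_i J_i(\theta,\psi_i)$). *)

theory Defs
  imports "HOL-Probability.Probability"
begin

text \<open>Index types: 'p indexes the p species (coordinates of Y, Z, off, m, s),
  'm indexes the m covariates.  B :: real^'p^'m has entries B$k$j (k covariate, j species),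
  so its column B_j is (\<chi> k. B$k$j) and x^T B_j = \<Sum>k. x$k * B$k$j.\<close>

definition xB :: "real^'m \<Rightarrow> real^'p^'m \<Rightarrow> 'p \<Rightarrow> real" where
  "xB x B j = (\<Sum>k\<in>UNIV. x$k * B$k$j)"

definition sym_posdef :: "real^'p^'p \<Rightarrow> bool" where
  "sym_posdef \<Omega> \<longleftrightarrow> transpose \<Omega> = \<Omega> \<and> (\<forall>v. v \<noteq> 0 \<longrightarrow> v \<bullet> (\<Omega> *v v) > 0)"

definition gauss_prec_density :: "real^'p^'p \<Rightarrow> real^'p \<Rightarrow> real" where
  "gauss_prec_density \<Omega> z =
     (2 * pi) powr (- real CARD('p) / 2) * sqrt (det \<Omega>) * exp (- (z \<bullet> (\<Omega> *v z)) / 2)"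

definition poisson_pmf_val :: "real \<Rightarrow> nat \<Rightarrow> real" where
  "poisson_pmf_val lam k = exp (- lam) * lam ^ k / fact k"

definition pln_pmf :: "(real^'p^'m) \<times> (real^'p^'p) \<Rightarrow> real^'m \<Rightarrow> real^'p \<Rightarrow> nat^'p \<Rightarrow> real" where
  "pln_pmf \<theta> x off y =
     (\<integral>z. gauss_prec_density (snd \<theta>) z *
           (\<Prod>j\<in>UNIV. poisson_pmf_val (exp (off$j + xB x (fst \<theta>) j + z$j)) (y$j)) \<partial>lborel)"

definition pln_measure :: "(real^'p^'m) \<times> (real^'p^'p) \<Rightarrow> real^'m \<Rightarrow> real^'p \<Rightarrow> (nat^'p) measure" where
  "pln_measure \<theta> x off = density (count_space UNIV) (\<lambda>y. ennreal (pln_pmf \<theta> x off y))"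

definition elbo :: "real^'m \<Rightarrow> real^'p \<Rightarrow> nat^'p \<Rightarrow> (real^'p^'m) \<times> (real^'p^'p)
                     \<Rightarrow> (real^'p) \<times> (real^'p) \<Rightarrow> real" where
  "elbo x off y \<theta> \<psi> =
     (let B = fst \<theta>; \<Omega> = snd \<theta>; m = fst \<psi>; s = snd \<psi> in
       (\<Sum>j\<in>UNIV. real (y$j) * (off$j + m$j + xB x B j))
       - (\<Sum>j\<in>UNIV. exp (off$j + xB x B j + m$j + (s$j)\<^sup>2 / 2))
       - (\<Sum>j\<in>UNIV. ln (fact (y$j)))
       + ln (det \<Omega>) / 2
       - (m \<bullet> (\<Omega> *v m)) / 2
       - (\<Sum>j\<in>UNIV. \<Omega>$j$j * (s$j)\<^sup>2) / 2
       + (\<Sum>j\<in>UNIV. ln (s$j))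
       + real CARD('p) / 2)"

definition profiled :: "((real^'p) \<times> (real^'p)) set \<Rightarrow> real^'m \<Rightarrow> real^'p
                         \<Rightarrow> (real^'p^'m) \<times> (real^'p^'p) \<Rightarrow> nat^'p \<Rightarrow> real" where
  "profiled \<Psi> x off \<theta> y = (SUP \<psi>\<in>\<Psi>. elbo x off y \<theta> \<psi>)"

end

theory Submission
  imports Defs
begin

text \<open>The parameter \<theta> enters the ELBO only through the linear predictors x^T B_j and through a
  part that is continuous on the compact set \<Theta> \<times> closure \<Psi>. Uniform continuity there shows
  that the profiled objective L(\<theta>; y) moves by at most e (1 + sum_j y_j) when \<theta> moves by less
  than some d(e), uniformly in y, and the term -sum_j ln y_j! of the ELBO makes 1 + sum_j y_j
  integrable as soon as one L(\<theta>; -) is. With this envelope, a finite d-net of \<Theta> and the weak law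
  of large numbers give a uniform law of large numbers on \<Theta>; since the continuous limit M has a
  well-separated maximum at \<theta>bar on the compact \<Theta>, Wald's argument shows that every maximiser
  of the empirical objective converges to \<theta>bar in probability.\<close>

section \<open>The weak law of large numbers\<close>

definition truncate :: "real \<Rightarrow> real \<Rightarrow> real" where
  "truncate k t = max (- k) (min k t)"

lemma integral_truncation_error_tendsto_zero:
  fixes h :: "'b \<Rightarrow> real"
  assumes "integrable \<mu> h"
  shows "(\<lambda>k. \<integral>y. \<bar>h y - truncate (real k) (h y)\<bar> \<partial>\<mu>) \<longlonglongrightarrow> 0"
proof -
  have "(\<lambda>k. \<integral>y. \<bar>h y - truncate (real k) (h y)\<bar> \<partial>\<mu>) \<longlonglongrightarrow> (\<integral>y. 0 \<partial>\<mu>)"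
  proof (rule integral_dominated_convergence[where w="\<lambda>y. \<bar>h y\<bar>"])
    show "AE y in \<mu>. (\<lambda>k. \<bar>h y - truncate (real k) (h y)\<bar>) \<longlonglongrightarrow> 0"
    proof (rule AE_I2)
      fix y
      obtain k\<^sub>0 :: nat where "\<bar>h y\<bar> \<le> real k\<^sub>0"
        using real_arch_simple by blast
      then have "\<forall>k\<ge>k\<^sub>0. \<bar>h y - truncate (real k) (h y)\<bar> = 0"
        by (auto simp: truncate_def)
      then show "(\<lambda>k. \<bar>h y - truncate (real k) (h y)\<bar>) \<longlonglongrightarrow> 0"
        by (intro tendsto_eventually) (auto simp: eventually_sequentially)
    qed
  qed (use assms in \<open>auto intro!: AE_I2 simp: truncate_def\<close>)
  then show ?thesis by simp
qed

locale iid_sample = prob_space M for M :: "'a measure" +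
  fixes N :: "'b measure" and \<mu> :: "'b measure" and Y :: "nat \<Rightarrow> 'a \<Rightarrow> 'b"
  assumes indep_Y: "indep_vars (\<lambda>_. N) Y UNIV"
    and law_Y: "\<And>i. distr M N (Y i) = \<mu>"
begin

lemma measurable_Y [measurable]: "Y i \<in> measurable M N"
  using indep_Y unfolding indep_vars_def by auto

lemma sets_law: "sets \<mu> = sets N"
  using law_Y[of 0] by (metis sets_distr)

lemma prob_space_law: "prob_space \<mu>"
  unfolding law_Y[of 0, symmetric] by (rule prob_space_distr) simp

lemma borel_measurable_law_iff:
  fixes h :: "'b \<Rightarrow> real"
  shows "h \<in> borel_measurable \<mu> \<longleftrightarrow> h \<in> borel_measurable N"
  by (subst measurable_cong_sets[OF sets_law refl]) (rule refl)

lemma integrable_comp_Y: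
  fixes h :: "'b \<Rightarrow> real"
  assumes "h \<in> borel_measurable N"
  shows "integrable M (\<lambda>\<omega>. h (Y i \<omega>)) \<longleftrightarrow> integrable \<mu> h"
  using integrable_distr_eq[of "Y i" M N h] assms by (simp add: law_Y)

lemma expectation_comp_Y:
  fixes h :: "'b \<Rightarrow> real"
  assumes "h \<in> borel_measurable N"
  shows "expectation (\<lambda>\<omega>. h (Y i \<omega>)) = integral\<^sup>L \<mu> h"
  using integral_distr[of "Y i" M N h] assms by (simp add: law_Y)

lemma distr_comp_Y:
  fixes h :: "'b \<Rightarrow> real"
  assumes "h \<in> borel_measurable N"
  shows "distr M borel (\<lambda>\<omega>. h (Y i \<omega>)) = distr \<mu> borel h"
proof -
  have "distr M borel (\<lambda>\<omega>. h (Y i \<omega>)) = distr (distr M N (Y i)) borel h"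
    using assms by (subst distr_distr) (auto simp: comp_def)
  then show ?thesis by (simp add: law_Y)
qed

lemma indep_vars_comp_Y:
  fixes h :: "'b \<Rightarrow> real"
  assumes "h \<in> borel_measurable N"
  shows "indep_vars (\<lambda>_. borel) (\<lambda>i \<omega>. h (Y i \<omega>)) I"
proof -
  have "indep_vars (\<lambda>_. borel) (\<lambda>i \<omega>. h (Y i \<omega>)) UNIV"
    by (rule indep_vars_compose2[OF indep_Y]) (use assms in simp)
  then show ?thesis by (rule indep_vars_subset) simp
qed

definition sample_mean :: "nat \<Rightarrow> ('b \<Rightarrow> real) \<Rightarrow> 'a \<Rightarrow> real" where
  "sample_mean n h \<omega> = (\<Sum>i<n. h (Y i \<omega>)) / n"

lemma borel_measurable_sample_mean [measurable]:
  assumes [measurable]: "h \<in> borel_measurable N"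
  shows "sample_mean n h \<in> borel_measurable M"
  unfolding sample_mean_def by measurable

lemma integrable_sample_mean:
  assumes "integrable \<mu> h"
  shows "integrable M (sample_mean n h)"
  using assms unfolding sample_mean_def
  by (intro integrable_divide integrable_sum)
     (simp add: integrable_comp_Y borel_measurable_integrable borel_measurable_law_iff[symmetric])

lemma expectation_sample_mean:
  assumes "integrable \<mu> h" and "n \<ge> 1"
  shows "expectation (sample_mean n h) = integral\<^sup>L \<mu> h"
proof -
  have h: "h \<in> borel_measurable N"
    using assms by (simp add: borel_measurable_law_iff[symmetric])
  have "expectation (sample_mean n h) = (\<Sum>i<n. expectation (\<lambda>\<omega>. h (Y i \<omega>))) / n"
    unfolding sample_mean_def using assms h by (simp add: integrable_comp_Y)
  also have "\<dots> = integral\<^sup>L \<mu> h"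
    using assms by (simp add: expectation_comp_Y[OF h])
  finally show ?thesis .
qed

lemma prob_sample_mean_ge_le:
  assumes "integrable \<mu> h" and "\<And>y. h y \<ge> 0" and "c > 0" and "n \<ge> 1"
  shows "prob {\<omega>\<in>space M. c \<le> sample_mean n h \<omega>} \<le> integral\<^sup>L \<mu> h / c"
proof -
  have "prob {\<omega>\<in>space M. c \<le> sample_mean n h \<omega>} \<le> expectation (sample_mean n h) / c"
    using assms
    by (intro integral_Markov_inequality_measure[where A="space M"] integrable_sample_mean)
       (auto simp: sample_mean_def intro!: AE_I2 sum_nonneg divide_nonneg_nonneg)
  then show ?thesis
    using assms by (simp add: expectation_sample_mean)
qed

lemma weak_law_of_large_numbers_bounded:
  assumes h: "h \<in> borel_measurable N" and bounds: "\<And>y. h y \<in> {a..b}" "a < b" and "\<epsilon> > 0"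
  shows "(\<lambda>n. prob {\<omega>\<in>space M. \<epsilon> \<le> \<bar>sample_mean n h \<omega> - integral\<^sup>L \<mu> h\<bar>}) \<longlonglongrightarrow> 0"
proof -
  define c where "c = 2 * \<epsilon>\<^sup>2 / (b - a)\<^sup>2"
  have "c > 0"
    using assms by (simp add: c_def)
  have Hoeffding: "prob {\<omega>\<in>space M. \<epsilon> \<le> \<bar>sample_mean n h \<omega> - integral\<^sup>L \<mu> h\<bar>} \<le> 2 * exp (- c) ^ n"
    if "n \<ge> 1" for n
  proof -
    interpret Hoeffding_ineq_iid M "{..<n}" "\<lambda>i \<omega>. h (Y i \<omega>)" "\<lambda>\<omega>. h (Y 0 \<omega>)" a b
      "expectation (\<lambda>\<omega>. h (Y 0 \<omega>))"
    proof unfold_locales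
      show "indep_vars (\<lambda>_. borel) (\<lambda>i \<omega>. h (Y i \<omega>)) {..<n}"
        by (rule indep_vars_comp_Y[OF h])
      show "distr M borel (\<lambda>\<omega>. h (Y i \<omega>)) = distr M borel (\<lambda>\<omega>. h (Y 0 \<omega>))" for i
        by (simp add: distr_comp_Y[OF h])
      show "random_variable borel (\<lambda>\<omega>. h (Y 0 \<omega>))"
        by (rule measurable_compose[OF measurable_Y h])
      show "AE \<omega> in M. h (Y 0 \<omega>) \<in> {a..b}"
        using bounds(1) by simp
    qed simp
    have "prob {\<omega>\<in>space M. \<epsilon> \<le> \<bar>(\<Sum>i\<in>{..<n}. h (Y i \<omega>)) / card {..<n} - expectation (\<lambda>\<omega>. h (Y 0 \<omega>))\<bar>}
        \<le> 2 * exp (-2 * real (card {..<n}) * \<epsilon>\<^sup>2 / (b - a)\<^sup>2)"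
      by (rule Hoeffding_ineq_abs_ge') (use assms that in \<open>auto simp: lessThan_empty_iff\<close>)
    also have "-2 * real (card {..<n}) * \<epsilon>\<^sup>2 / (b - a)\<^sup>2 = real n * (- c)"
      by (simp add: c_def)
    finally show ?thesis
      by (simp add: sample_mean_def expectation_comp_Y[OF h] flip: exp_of_nat_mult)
  qed
  have "(\<lambda>n. 2 * exp (- c) ^ n) \<longlonglongrightarrow> 0"
    using \<open>c > 0\<close> by (intro tendsto_mult_right_zero LIMSEQ_power_zero) simp
  then show ?thesis
    by (rule tendsto_sandwich[OF _ _ tendsto_const, rotated 2]) (auto intro: eventually_sequentiallyI Hoeffding)
qed

lemma sample_mean_diff_abs_le:
  "\<bar>sample_mean n f \<omega> - sample_mean n g \<omega>\<bar> \<le> sample_mean n (\<lambda>y. \<bar>f y - g y\<bar>) \<omega>"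
proof -
  have "\<bar>(\<Sum>i<n. f (Y i \<omega>)) - (\<Sum>i<n. g (Y i \<omega>))\<bar> \<le> (\<Sum>i<n. \<bar>f (Y i \<omega>) - g (Y i \<omega>)\<bar>)"
    by (metis sum_abs sum_subtractf)
  then show ?thesis
    by (simp add: sample_mean_def divide_right_mono flip: diff_divide_distrib)
qed

lemma prob_deviation_le_truncated:
  assumes h: "integrable \<mu> h" and "k \<ge> 0" and "n \<ge> 1" and "\<epsilon> > 0"
    and small: "(\<integral>y. \<bar>h y - truncate k (h y)\<bar> \<partial>\<mu>) < \<epsilon>/3"
  shows "prob {\<omega>\<in>space M. \<epsilon> \<le> \<bar>sample_mean n h \<omega> - integral\<^sup>L \<mu> h\<bar>}
    \<le> prob {\<omega>\<in>space M. \<epsilon>/3 \<le> \<bar>sample_mean n (\<lambda>y. truncate k (h y)) \<omega> - (\<integral>y. truncate k (h y) \<partial>\<mu>)\<bar>}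
      + (\<integral>y. \<bar>h y - truncate k (h y)\<bar> \<partial>\<mu>) / (\<epsilon>/3)"
proof -
  define \<phi> where "\<phi> = (\<lambda>y. truncate k (h y))"
  define \<psi> where "\<psi> = (\<lambda>y. \<bar>h y - \<phi> y\<bar>)"
  have [measurable]: "h \<in> borel_measurable N" "\<phi> \<in> borel_measurable N" "\<psi> \<in> borel_measurable N"
    using h by (simp_all add: \<phi>_def \<psi>_def truncate_def borel_measurable_law_iff[symmetric])
  have int_\<phi>: "integrable \<mu> \<phi>"
    using h \<open>k \<ge> 0\<close>
    by (intro Bochner_Integration.integrable_bound[OF h]) (auto simp: \<phi>_def truncate_def)
  have int_\<psi>: "integrable \<mu> \<psi>"
    using h int_\<phi> by (simp add: \<psi>_def)
  have "\<bar>integral\<^sup>L \<mu> h - integral\<^sup>L \<mu> \<phi>\<bar> \<le> integral\<^sup>L \<mu> \<psi>"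
    using integral_norm_bound[of \<mu> "\<lambda>y. h y - \<phi> y"] h int_\<phi> by (simp add: \<psi>_def)
  then have "{\<omega>\<in>space M. \<epsilon> \<le> \<bar>sample_mean n h \<omega> - integral\<^sup>L \<mu> h\<bar>}
      \<subseteq> {\<omega>\<in>space M. \<epsilon>/3 \<le> \<bar>sample_mean n \<phi> \<omega> - integral\<^sup>L \<mu> \<phi>\<bar>} \<union> {\<omega>\<in>space M. \<epsilon>/3 \<le> sample_mean n \<psi> \<omega>}"
  proof safe
    fix \<omega> assume "\<epsilon> \<le> \<bar>sample_mean n h \<omega> - integral\<^sup>L \<mu> h\<bar>" "\<not> \<epsilon>/3 \<le> sample_mean n \<psi> \<omega>"
    moreover have "\<bar>sample_mean n h \<omega> - sample_mean n \<phi> \<omega>\<bar> \<le> sample_mean n \<psi> \<omega>"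
      unfolding \<psi>_def by (rule sample_mean_diff_abs_le)
    moreover have "integral\<^sup>L \<mu> \<psi> < \<epsilon>/3"
      using small by (simp add: \<psi>_def \<phi>_def)
    ultimately show "\<epsilon>/3 \<le> \<bar>sample_mean n \<phi> \<omega> - integral\<^sup>L \<mu> \<phi>\<bar>"
      using \<open>\<bar>integral\<^sup>L \<mu> h - integral\<^sup>L \<mu> \<phi>\<bar> \<le> integral\<^sup>L \<mu> \<psi>\<close> by arith
  qed
  then have "prob {\<omega>\<in>space M. \<epsilon> \<le> \<bar>sample_mean n h \<omega> - integral\<^sup>L \<mu> h\<bar>}
      \<le> prob {\<omega>\<in>space M. \<epsilon>/3 \<le> \<bar>sample_mean n \<phi> \<omega> - integral\<^sup>L \<mu> \<phi>\<bar>}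
        + prob {\<omega>\<in>space M. \<epsilon>/3 \<le> sample_mean n \<psi> \<omega>}"
    by (rule order_trans[OF finite_measure_mono measure_Un_le]) measurable
  also have "prob {\<omega>\<in>space M. \<epsilon>/3 \<le> sample_mean n \<psi> \<omega>} \<le> integral\<^sup>L \<mu> \<psi> / (\<epsilon>/3)"
    using int_\<psi> \<open>\<epsilon> > 0\<close> \<open>n \<ge> 1\<close> by (intro prob_sample_mean_ge_le) (auto simp: \<psi>_def)
  finally show ?thesis
    by (simp add: \<phi>_def \<psi>_def)
qed

text \<open>Truncation at a level k chosen from the integrability of h: the bounded part obeys the weak
  law by Hoeffding's inequality, the remainder is controlled by Markov's inequality.\<close>

theorem weak_law_of_large_numbers:
  assumes h: "integrable \<mu> h" and "\<epsilon> > 0"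
  shows "(\<lambda>n. prob {\<omega>\<in>space M. \<epsilon> \<le> \<bar>sample_mean n h \<omega> - integral\<^sup>L \<mu> h\<bar>}) \<longlonglongrightarrow> 0"
proof (rule order_tendstoI)
  fix r :: real assume "r > 0"
  then have "min (\<epsilon>/3) (\<epsilon> * r/6) > 0"
    using \<open>\<epsilon> > 0\<close> by simp
  then obtain k :: nat where k: "(\<integral>y. \<bar>h y - truncate k (h y)\<bar> \<partial>\<mu>) < min (\<epsilon>/3) (\<epsilon> * r/6)"
    using order_tendstoD(2)[OF integral_truncation_error_tendsto_zero[OF h]]
    by (meson eventually_sequentially order_refl)
  then have tail: "(\<integral>y. \<bar>h y - truncate k (h y)\<bar> \<partial>\<mu>) / (\<epsilon>/3) < r/2"
    using \<open>\<epsilon> > 0\<close> by (simp add: field_simps)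
  have "h \<in> borel_measurable N"
    using h by (simp add: borel_measurable_law_iff[symmetric])
  then have "(\<lambda>n. prob {\<omega>\<in>space M. \<epsilon>/3 \<le> \<bar>sample_mean n (\<lambda>y. truncate k (h y)) \<omega>
      - (\<integral>y. truncate k (h y) \<partial>\<mu>)\<bar>}) \<longlonglongrightarrow> 0"
    using \<open>\<epsilon> > 0\<close>
    by (intro weak_law_of_large_numbers_bounded[where a="- real k - 1" and b="real k + 1"])
       (auto simp: truncate_def)
  then have "\<forall>\<^sub>F n in sequentially. n \<ge> 1 \<and> prob {\<omega>\<in>space M. \<epsilon>/3 \<le> \<bar>sample_mean n (\<lambda>y. truncate k (h y)) \<omega>
      - (\<integral>y. truncate k (h y) \<partial>\<mu>)\<bar>} < r/2"
    using \<open>r > 0\<close> by (intro eventually_conj eventually_ge_at_top order_tendstoD(2)) auto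
  then show "\<forall>\<^sub>F n in sequentially. prob {\<omega>\<in>space M. \<epsilon> \<le> \<bar>sample_mean n h \<omega> - integral\<^sup>L \<mu> h\<bar>} < r"
  proof (rule eventually_mono)
    fix n assume n: "n \<ge> 1 \<and> prob {\<omega>\<in>space M. \<epsilon>/3 \<le> \<bar>sample_mean n (\<lambda>y. truncate k (h y)) \<omega>
      - (\<integral>y. truncate k (h y) \<partial>\<mu>)\<bar>} < r/2"
    have "prob {\<omega>\<in>space M. \<epsilon> \<le> \<bar>sample_mean n h \<omega> - integral\<^sup>L \<mu> h\<bar>}
      \<le> prob {\<omega>\<in>space M. \<epsilon>/3 \<le> \<bar>sample_mean n (\<lambda>y. truncate k (h y)) \<omega> - (\<integral>y. truncate k (h y) \<partial>\<mu>)\<bar>}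
        + (\<integral>y. \<bar>h y - truncate k (h y)\<bar> \<partial>\<mu>) / (\<epsilon>/3)"
      using n k \<open>\<epsilon> > 0\<close> by (intro prob_deviation_le_truncated[OF h]) auto
    then show "prob {\<omega>\<in>space M. \<epsilon> \<le> \<bar>sample_mean n h \<omega> - integral\<^sup>L \<mu> h\<bar>} < r"
      using n tail by linarith
  qed
qed (auto intro!: always_eventually less_le_trans[OF _ measure_nonneg])

lemma sample_mean_mono:
  "(\<And>y. f y \<le> g y) \<Longrightarrow> sample_mean n f \<omega> \<le> sample_mean n g \<omega>"
  unfolding sample_mean_def by (intro divide_right_mono sum_mono) auto

lemma sample_mean_cmult: "sample_mean n (\<lambda>y. c * f y) \<omega> = c * sample_mean n f \<omega>"
  unfolding sample_mean_def by (simp add: sum_distrib_left)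

lemma sets_sample_mean_deviation_finite:
  assumes "finite H" and "\<And>h. h \<in> H \<Longrightarrow> integrable \<mu> h"
  shows "{\<omega>\<in>space M. \<exists>h\<in>H. \<tau> \<le> \<bar>sample_mean n h \<omega> - integral\<^sup>L \<mu> h\<bar>} \<in> events"
proof (intro sets.sets_Collect_finite_Ex \<open>finite H\<close>)
  fix h assume "h \<in> H"
  then have [measurable]: "h \<in> borel_measurable N"
    using assms(2) by (simp add: borel_measurable_law_iff[symmetric])
  show "{\<omega>\<in>space M. \<tau> \<le> \<bar>sample_mean n h \<omega> - integral\<^sup>L \<mu> h\<bar>} \<in> events"
    by measurable
qed

lemma weak_law_of_large_numbers_finite:
  assumes "finite H" and "\<And>h. h \<in> H \<Longrightarrow> integrable \<mu> h" and "\<tau> > 0"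
  shows "(\<lambda>n. prob {\<omega>\<in>space M. \<exists>h\<in>H. \<tau> \<le> \<bar>sample_mean n h \<omega> - integral\<^sup>L \<mu> h\<bar>}) \<longlonglongrightarrow> 0"
proof (rule tendsto_sandwich[OF _ _ tendsto_const])
  have [measurable]: "h \<in> borel_measurable N" if "h \<in> H" for h
    using assms(2)[OF that] by (simp add: borel_measurable_law_iff[symmetric])
  have "{\<omega>\<in>space M. \<exists>h\<in>H. \<tau> \<le> \<bar>sample_mean n h \<omega> - integral\<^sup>L \<mu> h\<bar>}
      = (\<Union>h\<in>H. {\<omega>\<in>space M. \<tau> \<le> \<bar>sample_mean n h \<omega> - integral\<^sup>L \<mu> h\<bar>})" for n
    by auto
  then show "\<forall>\<^sub>F n in sequentially. prob {\<omega>\<in>space M. \<exists>h\<in>H. \<tau> \<le> \<bar>sample_mean n h \<omega> - integral\<^sup>L \<mu> h\<bar>}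
      \<le> (\<Sum>h\<in>H. prob {\<omega>\<in>space M. \<tau> \<le> \<bar>sample_mean n h \<omega> - integral\<^sup>L \<mu> h\<bar>})"
    using \<open>finite H\<close> by (auto intro!: always_eventually finite_measure_subadditive_finite)
  show "(\<lambda>n. \<Sum>h\<in>H. prob {\<omega>\<in>space M. \<tau> \<le> \<bar>sample_mean n h \<omega> - integral\<^sup>L \<mu> h\<bar>}) \<longlonglongrightarrow> 0"
    using assms by (intro tendsto_null_sum weak_law_of_large_numbers)
qed auto

end

section \<open>Consistency of M-estimators\<close>

locale m_estimation = iid_sample M N \<mu> Y
  for M :: "'a measure" and N :: "'b measure" and \<mu> and Y :: "nat \<Rightarrow> 'a \<Rightarrow> 'b" +
  fixes \<Theta> :: "'t::metric_space set" and f :: "'t \<Rightarrow> 'b \<Rightarrow> real" and g :: "'b \<Rightarrow> real"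
  assumes compact_\<Theta>: "compact \<Theta>"
    and integrable_f: "\<And>\<theta>. \<theta> \<in> \<Theta> \<Longrightarrow> integrable \<mu> (f \<theta>)"
    and integrable_g: "integrable \<mu> g"
    and nonneg_g: "\<And>y. g y \<ge> 0"
    and modulus: "\<And>e. e > 0 \<Longrightarrow> \<exists>d>0. \<forall>\<theta>\<in>\<Theta>. \<forall>\<theta>'\<in>\<Theta>. dist \<theta> \<theta>' < d \<longrightarrow>
        (\<forall>y. \<bar>f \<theta> y - f \<theta>' y\<bar> \<le> e * g y)"
begin

definition expected_criterion :: "'t \<Rightarrow> real" where
  "expected_criterion \<theta> = integral\<^sup>L \<mu> (f \<theta>)"

lemma expected_criterion_diff_le:
  assumes "\<theta> \<in> \<Theta>" "\<theta>' \<in> \<Theta>" and "\<And>y. \<bar>f \<theta> y - f \<theta>' y\<bar> \<le> e * g y"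
  shows "\<bar>expected_criterion \<theta> - expected_criterion \<theta>'\<bar> \<le> e * integral\<^sup>L \<mu> g"
proof -
  have "\<bar>expected_criterion \<theta> - expected_criterion \<theta>'\<bar> = \<bar>\<integral>y. f \<theta> y - f \<theta>' y \<partial>\<mu>\<bar>"
    using assms by (simp add: expected_criterion_def integrable_f)
  also have "\<dots> \<le> (\<integral>y. \<bar>f \<theta> y - f \<theta>' y\<bar> \<partial>\<mu>)"
    using integral_norm_bound[of \<mu> "\<lambda>y. f \<theta> y - f \<theta>' y"] by simp
  also have "\<dots> \<le> (\<integral>y. e * g y \<partial>\<mu>)"
    using assms by (intro integral_mono) (auto simp: integrable_f integrable_g)
  finally show ?thesis by simp
qed

lemma continuous_on_expected_criterion: "continuous_on \<Theta> expected_criterion"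
  unfolding continuous_on_iff
proof (intro ballI allI impI)
  fix \<theta> and r :: real assume "\<theta> \<in> \<Theta>" "r > 0"
  define e where "e = r / (integral\<^sup>L \<mu> g + 1)"
  have "integral\<^sup>L \<mu> g \<ge> 0"
    by (simp add: nonneg_g)
  then have "e > 0" "e * integral\<^sup>L \<mu> g < r"
    using \<open>r > 0\<close> by (auto simp: e_def field_simps)
  then obtain d where "d > 0" and d: "\<forall>\<theta>\<in>\<Theta>. \<forall>\<theta>'\<in>\<Theta>. dist \<theta> \<theta>' < d \<longrightarrow> (\<forall>y. \<bar>f \<theta> y - f \<theta>' y\<bar> \<le> e * g y)"
    using modulus by blast
  have "dist (expected_criterion \<theta>') (expected_criterion \<theta>) < r"
    if "\<theta>' \<in> \<Theta>" "dist \<theta>' \<theta> < d" for \<theta>'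
    using expected_criterion_diff_le[of \<theta>' \<theta> e] d that \<open>\<theta> \<in> \<Theta>\<close> \<open>e * integral\<^sup>L \<mu> g < r\<close>
    by (simp add: dist_real_def)
  then show "\<exists>d>0. \<forall>\<theta>'\<in>\<Theta>. dist \<theta>' \<theta> < d \<longrightarrow> dist (expected_criterion \<theta>') (expected_criterion \<theta>) < r"
    using \<open>d > 0\<close> by blast
qed

lemma sample_mean_deviation_le:
  assumes "\<theta> \<in> \<Theta>" "t \<in> \<Theta>" and pointwise: "\<And>y. \<bar>f \<theta> y - f t y\<bar> \<le> e * g y"
  shows "\<bar>sample_mean n (f \<theta>) \<omega> - expected_criterion \<theta>\<bar>
    \<le> \<bar>sample_mean n (f t) \<omega> - expected_criterion t\<bar> + e * (sample_mean n g \<omega> + integral\<^sup>L \<mu> g)"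
proof -
  have "\<bar>sample_mean n (f \<theta>) \<omega> - sample_mean n (f t) \<omega>\<bar> \<le> sample_mean n (\<lambda>y. e * g y) \<omega>"
    using sample_mean_diff_abs_le sample_mean_mono[OF pointwise] by (rule order_trans)
  moreover have "\<bar>expected_criterion \<theta> - expected_criterion t\<bar> \<le> e * integral\<^sup>L \<mu> g"
    using assms by (rule expected_criterion_diff_le)
  ultimately show ?thesis
    by (simp add: sample_mean_cmult distrib_left)
qed

lemma uniform_weak_law_of_large_numbers:
  assumes "\<tau> > 0"
  obtains D where "\<And>n. D n \<in> events" and "(\<lambda>n. prob (D n)) \<longlonglongrightarrow> 0"
    and "\<And>n \<omega> \<theta>. \<omega> \<in> space M - D n \<Longrightarrow> \<theta> \<in> \<Theta> \<Longrightarrow>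
      \<bar>sample_mean n (f \<theta>) \<omega> - expected_criterion \<theta>\<bar> < \<tau>"
proof -
  define G where "G = integral\<^sup>L \<mu> g"
  define \<tau>' where "\<tau>' = \<tau>/3"
  define e where "e = \<tau>' / (2 * G + \<tau>' + 1)"
  have "G \<ge> 0"
    by (simp add: G_def nonneg_g)
  have "\<tau>' > 0" "2 * G + \<tau>' + 1 > 0"
    using \<open>G \<ge> 0\<close> \<open>\<tau> > 0\<close> by (auto simp: \<tau>'_def)
  then have "e > 0" "e * (2 * G + \<tau>') < \<tau>'"
    by (auto simp: e_def field_simps)
  then have "e * (2 * G + \<tau>') + \<tau>' < \<tau>"
    using \<open>\<tau> > 0\<close> unfolding \<tau>'_def by linarith
  obtain d where "d > 0" and d: "\<forall>\<theta>\<in>\<Theta>. \<forall>\<theta>'\<in>\<Theta>. dist \<theta> \<theta>' < d \<longrightarrow> (\<forall>y. \<bar>f \<theta> y - f \<theta>' y\<bar> \<le> e * g y)"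
    using modulus[OF \<open>e > 0\<close>] by blast
  obtain F where "finite F" "F \<subseteq> \<Theta>" and F: "\<Theta> \<subseteq> (\<Union>t\<in>F. ball t d)"
    using seq_compact_imp_totally_bounded[OF compact_imp_seq_compact[OF compact_\<Theta>], rule_format, OF \<open>d > 0\<close>]
    by blast
  define H where "H = insert g (f ` F)"
  have "finite H" and int_H: "\<And>h. h \<in> H \<Longrightarrow> integrable \<mu> h"
    using \<open>finite F\<close> \<open>F \<subseteq> \<Theta>\<close> by (auto simp: H_def integrable_f integrable_g)
  define D where "D n = {\<omega>\<in>space M. \<exists>h\<in>H. \<tau>' \<le> \<bar>sample_mean n h \<omega> - integral\<^sup>L \<mu> h\<bar>}" for n
  show thesis
  proof
    show "D n \<in> events" for n
      unfolding D_def using \<open>finite H\<close> int_H by (rule sets_sample_mean_deviation_finite)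
    show "(\<lambda>n. prob (D n)) \<longlonglongrightarrow> 0"
      unfolding D_def using \<open>finite H\<close> int_H \<open>\<tau>' > 0\<close> by (rule weak_law_of_large_numbers_finite)
    fix n \<omega> \<theta> assume "\<omega> \<in> space M - D n" "\<theta> \<in> \<Theta>"
    then have close: "\<bar>sample_mean n h \<omega> - integral\<^sup>L \<mu> h\<bar> < \<tau>'" if "h \<in> H" for h
      using that by (auto simp: D_def not_le)
    obtain t where "t \<in> F" "dist \<theta> t < d"
      using F \<open>\<theta> \<in> \<Theta>\<close> by (auto simp: dist_commute)
    then have pointwise: "\<bar>f \<theta> y - f t y\<bar> \<le> e * g y" for y
      using d \<open>F \<subseteq> \<Theta>\<close> \<open>\<theta> \<in> \<Theta>\<close> by blast
    have "\<bar>sample_mean n (f \<theta>) \<omega> - expected_criterion \<theta>\<bar>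
        \<le> \<bar>sample_mean n (f t) \<omega> - expected_criterion t\<bar> + e * (sample_mean n g \<omega> + G)"
      unfolding G_def using \<open>t \<in> F\<close> \<open>F \<subseteq> \<Theta>\<close> \<open>\<theta> \<in> \<Theta>\<close>
      by (intro sample_mean_deviation_le pointwise) auto
    moreover have "\<bar>sample_mean n (f t) \<omega> - expected_criterion t\<bar> < \<tau>'"
      using close[of "f t"] \<open>t \<in> F\<close> by (simp add: H_def expected_criterion_def)
    moreover have "e * (sample_mean n g \<omega> + G) \<le> e * (2 * G + \<tau>')"
      using close[of g] \<open>e > 0\<close> by (simp add: H_def G_def)
    ultimately show "\<bar>sample_mean n (f \<theta>) \<omega> - expected_criterion \<theta>\<bar> < \<tau>"
      using \<open>e * (2 * G + \<tau>') + \<tau>' < \<tau>\<close> by linarith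
  qed
qed

lemma expected_criterion_well_separated:
  assumes "\<theta>\<^sub>0 \<in> \<Theta>" and max: "\<And>\<theta>. \<theta> \<in> \<Theta> \<Longrightarrow> \<theta> \<noteq> \<theta>\<^sub>0 \<Longrightarrow> expected_criterion \<theta> < expected_criterion \<theta>\<^sub>0"
    and "\<epsilon> > 0"
  obtains \<delta> where "\<delta> > 0"
    and "\<And>\<theta>. \<theta> \<in> \<Theta> \<Longrightarrow> \<epsilon> \<le> dist \<theta> \<theta>\<^sub>0 \<Longrightarrow> expected_criterion \<theta> \<le> expected_criterion \<theta>\<^sub>0 - \<delta>"
proof (cases "\<Theta> - ball \<theta>\<^sub>0 \<epsilon> = {}")
  case True
  then have "dist \<theta> \<theta>\<^sub>0 < \<epsilon>" if "\<theta> \<in> \<Theta>" for \<theta>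
    using that by (auto simp: dist_commute)
  then show ?thesis
    using that[of 1] by fastforce
next
  case False
  have "compact (\<Theta> - ball \<theta>\<^sub>0 \<epsilon>)"
    using compact_\<Theta> by (simp add: compact_diff)
  then obtain \<theta>\<^sub>1 where \<theta>\<^sub>1: "\<theta>\<^sub>1 \<in> \<Theta> - ball \<theta>\<^sub>0 \<epsilon>"
    and le: "\<And>\<theta>. \<theta> \<in> \<Theta> - ball \<theta>\<^sub>0 \<epsilon> \<Longrightarrow> expected_criterion \<theta> \<le> expected_criterion \<theta>\<^sub>1"
    using continuous_attains_sup[OF _ False] continuous_on_subset[OF continuous_on_expected_criterion]
    by (metis Diff_subset)
  have "\<theta>\<^sub>1 \<noteq> \<theta>\<^sub>0"
    using \<theta>\<^sub>1 \<open>\<epsilon> > 0\<close> by auto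
  then show ?thesis
    using that[of "expected_criterion \<theta>\<^sub>0 - expected_criterion \<theta>\<^sub>1"] max \<theta>\<^sub>1 le
    by (auto simp: dist_commute)
qed

theorem argmax_consistent:
  assumes "\<theta>\<^sub>0 \<in> \<Theta>" and max: "\<And>\<theta>. \<theta> \<in> \<Theta> \<Longrightarrow> \<theta> \<noteq> \<theta>\<^sub>0 \<Longrightarrow> expected_criterion \<theta> < expected_criterion \<theta>\<^sub>0"
    and [measurable]: "\<And>n. \<theta>hat n \<in> borel_measurable M"
    and in_\<Theta>: "\<And>n \<omega>. n \<ge> 1 \<Longrightarrow> \<omega> \<in> space M \<Longrightarrow> \<theta>hat n \<omega> \<in> \<Theta>"
    and argmax: "\<And>n \<omega> \<theta>. n \<ge> 1 \<Longrightarrow> \<omega> \<in> space M \<Longrightarrow> \<theta> \<in> \<Theta> \<Longrightarrow>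
      sample_mean n (f \<theta>) \<omega> \<le> sample_mean n (f (\<theta>hat n \<omega>)) \<omega>"
    and "\<epsilon> > 0"
  shows "(\<lambda>n. prob {\<omega>\<in>space M. \<epsilon> < dist (\<theta>hat n \<omega>) \<theta>\<^sub>0}) \<longlonglongrightarrow> 0"
proof -
  obtain \<delta> where "\<delta> > 0" and separated: "\<And>\<theta>. \<theta> \<in> \<Theta> \<Longrightarrow> \<epsilon> \<le> dist \<theta> \<theta>\<^sub>0 \<Longrightarrow>
      expected_criterion \<theta> \<le> expected_criterion \<theta>\<^sub>0 - \<delta>"
    using expected_criterion_well_separated[OF \<open>\<theta>\<^sub>0 \<in> \<Theta>\<close> max \<open>\<epsilon> > 0\<close>] by blast
  obtain D where [measurable]: "\<And>n. D n \<in> events" and D: "(\<lambda>n. prob (D n)) \<longlonglongrightarrow> 0"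
    and uniform: "\<And>n \<omega> \<theta>. \<omega> \<in> space M - D n \<Longrightarrow> \<theta> \<in> \<Theta> \<Longrightarrow>
      \<bar>sample_mean n (f \<theta>) \<omega> - expected_criterion \<theta>\<bar> < \<delta>/2"
    using uniform_weak_law_of_large_numbers[of "\<delta>/2"] \<open>\<delta> > 0\<close> by auto
  have "{\<omega>\<in>space M. \<epsilon> < dist (\<theta>hat n \<omega>) \<theta>\<^sub>0} \<subseteq> D n" if "n \<ge> 1" for n
  proof (rule subsetI, rule ccontr)
    fix \<omega> assume "\<omega> \<in> {\<omega>\<in>space M. \<epsilon> < dist (\<theta>hat n \<omega>) \<theta>\<^sub>0}" "\<omega> \<notin> D n"
    then have \<omega>: "\<omega> \<in> space M - D n" and far: "\<epsilon> \<le> dist (\<theta>hat n \<omega>) \<theta>\<^sub>0"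
      by auto
    have "\<theta>hat n \<omega> \<in> \<Theta>"
      using in_\<Theta> that \<omega> by blast
    then have "sample_mean n (f (\<theta>hat n \<omega>)) \<omega> < expected_criterion \<theta>\<^sub>0 - \<delta>/2"
      using uniform[OF \<omega> \<open>\<theta>hat n \<omega> \<in> \<Theta>\<close>] separated[OF \<open>\<theta>hat n \<omega> \<in> \<Theta>\<close> far]
      by arith
    moreover have "expected_criterion \<theta>\<^sub>0 - \<delta>/2 < sample_mean n (f \<theta>\<^sub>0) \<omega>"
      using uniform[OF \<omega> \<open>\<theta>\<^sub>0 \<in> \<Theta>\<close>] by arith
    ultimately show False
      using argmax[OF that _ \<open>\<theta>\<^sub>0 \<in> \<Theta>\<close>] \<omega> by fastforce
  qed
  moreover have "(\<lambda>\<theta>. dist \<theta> \<theta>\<^sub>0) \<in> borel_measurable borel"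
    by (intro borel_measurable_continuous_onI continuous_intros)
  ultimately show ?thesis
    by (intro tendsto_sandwich[OF _ _ tendsto_const D] eventually_sequentiallyI[of 1]
        finite_measure_mono) (auto simp: measure_nonneg)
qed

end

section \<open>The profiled ELBO of the Poisson-lognormal model\<close>

lemma continuous_on_det:
  "continuous_on S f \<Longrightarrow> continuous_on S (\<lambda>z. det (f z :: real^'n::finite^'n))"
  unfolding det_def by (intro continuous_intros)

lemma ln_fact_ge_linear:
  fixes A :: real
  shows "A * real k - exp A \<le> ln (fact k)"
proof -
  have "(\<Sum>n\<in>{k}. inverse (fact n) * exp A ^ n) \<le> (\<Sum>n. inverse (fact n) * exp A ^ n)"
    by (rule sum_le_suminf[OF summable_exp]) auto
  then have "exp A ^ k / fact k \<le> exp (exp A)"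
    by (simp add: exp_def scaleR_conv_of_real divide_inverse mult.commute)
  then have "exp (A * real k) \<le> exp (exp A) * fact k"
    by (simp add: pos_divide_le_eq exp_of_nat_mult[symmetric] mult.commute)
  then have "ln (exp (A * real k)) \<le> ln (exp (exp A) * fact k)"
    by (subst ln_le_cancel_iff) auto
  then show ?thesis
    by (simp add: ln_mult)
qed

lemma abs_cSUP_diff_le:
  fixes F G :: "'a \<Rightarrow> real"
  assumes "A \<noteq> {}" "bdd_above (F ` A)" "bdd_above (G ` A)" "\<And>a. a \<in> A \<Longrightarrow> \<bar>F a - G a\<bar> \<le> D"
  shows "\<bar>(SUP a\<in>A. F a) - (SUP a\<in>A. G a)\<bar> \<le> D"
proof -
  have "F a \<le> (SUP a\<in>A. G a) + D" "G a \<le> (SUP a\<in>A. F a) + D" if "a \<in> A" for a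
    using cSUP_upper[OF that assms(2)] cSUP_upper[OF that assms(3)] assms(4)[OF that] by linarith+
  then have "(SUP a\<in>A. F a) \<le> (SUP a\<in>A. G a) + D" "(SUP a\<in>A. G a) \<le> (SUP a\<in>A. F a) + D"
    using assms(1) by (auto intro!: cSUP_least)
  then show ?thesis
    by linarith
qed

text \<open>Apart from the linear predictors x^T B_j, the parameter enters the ELBO only through
  this term, which, unlike sum_j ln s_j, extends continuously to the closure of \<Psi>.\<close>

definition elbo_core :: "real^'m \<Rightarrow> real^'p \<Rightarrow> (real^'p^'m) \<times> (real^'p^'p) \<Rightarrow> (real^'p) \<times> (real^'p) \<Rightarrow> real"
  where
  "elbo_core x off \<theta> \<psi> = - (\<Sum>j\<in>UNIV. exp (off$j + xB x (fst \<theta>) j + fst \<psi>$j + (snd \<psi>$j)\<^sup>2 / 2))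
       + ln (det (snd \<theta>)) / 2 - (fst \<psi> \<bullet> (snd \<theta> *v fst \<psi>)) / 2
       - (\<Sum>j\<in>UNIV. snd \<theta>$j$j * (snd \<psi>$j)\<^sup>2) / 2"

definition elbo_param_part :: "real^'m \<Rightarrow> real^'p \<Rightarrow> (real^'p^'m) \<times> (real^'p^'p) \<Rightarrow> (real^'p) \<times> (real^'p)
    \<Rightarrow> real \<times> (real^'p)" where
  "elbo_param_part x off \<theta> \<psi> = (elbo_core x off \<theta> \<psi>, \<chi> j. xB x (fst \<theta>) j)"

definition count_sum :: "nat^'p \<Rightarrow> real" where
  "count_sum y = (\<Sum>j\<in>UNIV. real (y$j))"

lemma count_sum_nonneg: "count_sum y \<ge> 0"
  by (simp add: count_sum_def sum_nonneg)

lemma elbo_split: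
  fixes x :: "real^'m::finite" and off :: "real^'p::finite"
  shows "elbo x off y \<theta> \<psi> =
     (\<Sum>j\<in>UNIV. real (y$j) * (off$j + fst \<psi>$j + xB x (fst \<theta>) j)) - (\<Sum>j\<in>UNIV. ln (fact (y$j)))
     + elbo_core x off \<theta> \<psi> + (\<Sum>j\<in>UNIV. ln (snd \<psi> $ j)) + real CARD('p) / 2"
  unfolding elbo_def elbo_core_def Let_def by simp

lemma sym_posdef_det_nonzero:
  assumes "sym_posdef \<Omega>"
  shows "det \<Omega> \<noteq> 0"
proof -
  have "\<Omega> *v v \<noteq> 0" if "v \<noteq> 0" for v
    using assms that unfolding sym_posdef_def by force
  then have "inj ((*v) \<Omega>)"
    by (metis (no_types, lifting) injI eq_iff_diff_eq_0 matrix_vector_mult_diff_distrib)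
  then show ?thesis
    using det_nz_iff_inj[of "(*v) \<Omega>"] by (simp add: matrix_vector_mul_linear)
qed

lemma continuous_on_xB:
  "continuous_on S f \<Longrightarrow> continuous_on S (\<lambda>z. xB x (f z) j)"
  unfolding xB_def by (intro continuous_intros)

lemma continuous_on_elbo_core:
  assumes "\<forall>z\<in>S. sym_posdef (snd (fst z))"
  shows "continuous_on S (\<lambda>z. elbo_core x off (fst z) (snd z))"
  unfolding elbo_core_def inner_vec_def matrix_vector_mult_def
  using assms sym_posdef_det_nonzero
  by (intro continuous_intros continuous_on_xB continuous_on_det) auto

context
  fixes \<Theta> :: "((real^'p::finite^'m::finite) \<times> (real^'p^'p)) set"
    and \<Psi> :: "((real^'p) \<times> (real^'p)) set"
    and x :: "real^'m" and off :: "real^'p"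
  assumes \<Theta>_posdef: "\<Theta> \<subseteq> {\<theta>. sym_posdef (snd \<theta>)}" and compact_\<Theta>: "compact \<Theta>"
    and \<Psi>_pos: "\<Psi> \<subseteq> {\<psi>. \<forall>j. snd \<psi> $ j > 0}" and \<Psi>_ne: "\<Psi> \<noteq> {}" and bounded_\<Psi>: "bounded \<Psi>"
begin

lemma compact_elbo_domain: "compact (\<Theta> \<times> closure \<Psi>)"
  using compact_\<Theta> bounded_\<Psi> by (intro compact_Times) auto

lemma continuous_on_elbo_param_part:
  "continuous_on (\<Theta> \<times> closure \<Psi>) (\<lambda>z. elbo_param_part x off (fst z) (snd z))"
  unfolding elbo_param_part_def using \<Theta>_posdef
  by (intro continuous_intros continuous_on_elbo_core continuous_on_xB) auto

lemma elbo_param_part_bounded: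
  obtains b where "\<And>\<theta> \<psi> j. \<theta> \<in> \<Theta> \<Longrightarrow> \<psi> \<in> \<Psi> \<Longrightarrow>
    \<bar>elbo_core x off \<theta> \<psi>\<bar> \<le> b \<and> \<bar>xB x (fst \<theta>) j\<bar> \<le> b"
proof -
  have "bounded ((\<lambda>z. elbo_param_part x off (fst z) (snd z)) ` (\<Theta> \<times> closure \<Psi>))"
    by (intro compact_imp_bounded compact_continuous_image continuous_on_elbo_param_part
        compact_elbo_domain)
  then obtain b where b: "\<And>\<theta> \<psi>. \<theta> \<in> \<Theta> \<Longrightarrow> \<psi> \<in> \<Psi> \<Longrightarrow> norm (elbo_param_part x off \<theta> \<psi>) \<le> b"
    unfolding bounded_iff using closure_subset by fastforce
  show thesis
  proof (rule that)
    fix \<theta> \<psi> j assume "\<theta> \<in> \<Theta>" "\<psi> \<in> \<Psi>"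
    then show "\<bar>elbo_core x off \<theta> \<psi>\<bar> \<le> b \<and> \<bar>xB x (fst \<theta>) j\<bar> \<le> b"
      using b[of \<theta> \<psi>] norm_fst_le[of "elbo_core x off \<theta> \<psi>" "\<chi> j. xB x (fst \<theta>) j"]
        norm_snd_le[of "\<chi> j. xB x (fst \<theta>) j" "elbo_core x off \<theta> \<psi>"]
        component_le_norm_cart[of "\<chi> j. xB x (fst \<theta>) j" j]
      by (auto simp: elbo_param_part_def)
  qed
qed

lemma elbo_param_part_uniform_modulus:
  assumes "e > 0"
  obtains d where "d > 0" and "\<And>\<theta> \<theta>' \<psi> j. \<theta> \<in> \<Theta> \<Longrightarrow> \<theta>' \<in> \<Theta> \<Longrightarrow> \<psi> \<in> \<Psi> \<Longrightarrow> dist \<theta> \<theta>' < d \<Longrightarrow>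
    \<bar>elbo_core x off \<theta> \<psi> - elbo_core x off \<theta>' \<psi>\<bar> \<le> e \<and> \<bar>xB x (fst \<theta>) j - xB x (fst \<theta>') j\<bar> \<le> e"
proof -
  have "uniformly_continuous_on (\<Theta> \<times> closure \<Psi>) (\<lambda>z. elbo_param_part x off (fst z) (snd z))"
    by (intro compact_uniformly_continuous continuous_on_elbo_param_part compact_elbo_domain)
  then obtain d where "d > 0" and d: "\<And>z z'. z \<in> \<Theta> \<times> closure \<Psi> \<Longrightarrow> z' \<in> \<Theta> \<times> closure \<Psi> \<Longrightarrow>
      dist z' z < d \<Longrightarrow> dist (elbo_param_part x off (fst z') (snd z')) (elbo_param_part x off (fst z) (snd z)) < e"
    unfolding uniformly_continuous_on_def using \<open>e > 0\<close> by metis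
  show thesis
  proof (rule that[OF \<open>d > 0\<close>])
    fix \<theta> \<theta>' \<psi> j assume "\<theta> \<in> \<Theta>" "\<theta>' \<in> \<Theta>" "\<psi> \<in> \<Psi>" "dist \<theta> \<theta>' < d"
    then have "dist (elbo_param_part x off \<theta> \<psi>) (elbo_param_part x off \<theta>' \<psi>) < e"
      using d[of "(\<theta>', \<psi>)" "(\<theta>, \<psi>)"] closure_subset by (auto simp: dist_Pair_Pair)
    then show "\<bar>elbo_core x off \<theta> \<psi> - elbo_core x off \<theta>' \<psi>\<bar> \<le> e \<and> \<bar>xB x (fst \<theta>) j - xB x (fst \<theta>') j\<bar> \<le> e"
      using dist_fst_le[of "elbo_param_part x off \<theta> \<psi>" "elbo_param_part x off \<theta>' \<psi>"]
        dist_snd_le[of "elbo_param_part x off \<theta> \<psi>" "elbo_param_part x off \<theta>' \<psi>"]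
        dist_vec_nth_le[where x="\<chi> j. xB x (fst \<theta>) j" and y="\<chi> j. xB x (fst \<theta>') j" and i=j]
      by (auto simp: elbo_param_part_def dist_real_def)
  qed
qed

lemma elbo_le_linear:
  obtains a K where "a \<ge> 0" and "\<And>\<theta> \<psi> y. \<theta> \<in> \<Theta> \<Longrightarrow> \<psi> \<in> \<Psi> \<Longrightarrow>
    elbo x off y \<theta> \<psi> \<le> a * count_sum y + K - (\<Sum>j\<in>UNIV. ln (fact (y$j)))"
proof -
  obtain b where b: "\<And>\<theta> \<psi> j. \<theta> \<in> \<Theta> \<Longrightarrow> \<psi> \<in> \<Psi> \<Longrightarrow>
      \<bar>elbo_core x off \<theta> \<psi>\<bar> \<le> b \<and> \<bar>xB x (fst \<theta>) j\<bar> \<le> b"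
    using elbo_param_part_bounded by blast
  obtain R where R: "\<And>\<psi>. \<psi> \<in> \<Psi> \<Longrightarrow> norm \<psi> \<le> R"
    using bounded_\<Psi> unfolding bounded_iff by blast
  have R_coord: "\<bar>fst \<psi> $ j\<bar> \<le> R" "\<bar>snd \<psi> $ j\<bar> \<le> R" if "\<psi> \<in> \<Psi>" for \<psi> j
    using R[OF that] component_le_norm_cart[of "fst \<psi>" j] component_le_norm_cart[of "snd \<psi>" j]
      norm_fst_le[of "fst \<psi>" "snd \<psi>"] norm_snd_le[of "snd \<psi>" "fst \<psi>"] by auto
  define a where "a = (\<Sum>j\<in>UNIV. \<bar>off$j\<bar>) + \<bar>R\<bar> + \<bar>b\<bar>"
  have "a \<ge> 0"
    by (simp add: a_def sum_nonneg)
  moreover have "elbo x off y \<theta> \<psi> \<le> a * count_sum y + (b + CARD('p) * R + CARD('p) / 2)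
      - (\<Sum>j\<in>UNIV. ln (fact (y$j)))" if "\<theta> \<in> \<Theta>" "\<psi> \<in> \<Psi>" for \<theta> \<psi> y
  proof -
    have "off$j + fst \<psi>$j + xB x (fst \<theta>) j \<le> a" for j
      using member_le_sum[of j UNIV "\<lambda>j. \<bar>off$j\<bar>"] R_coord[OF \<open>\<psi> \<in> \<Psi>\<close>, of j] b[OF that, of j]
      by (simp add: a_def) linarith
    then have "(\<Sum>j\<in>UNIV. real (y$j) * (off$j + fst \<psi>$j + xB x (fst \<theta>) j)) \<le> a * count_sum y"
      unfolding count_sum_def sum_distrib_left
      by (intro sum_mono) (metis mult.commute mult_left_mono of_nat_0_le_iff)
    moreover have "ln (snd \<psi> $ j) \<le> R" for j
      using ln_le_minus_one[of "snd \<psi> $ j"] \<Psi>_pos R_coord(2)[OF \<open>\<psi> \<in> \<Psi>\<close>, of j] \<open>\<psi> \<in> \<Psi>\<close> by force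
    then have "(\<Sum>j\<in>UNIV. ln (snd \<psi> $ j)) \<le> CARD('p) * R"
      using sum_mono[of UNIV "\<lambda>j. ln (snd \<psi> $ j)" "\<lambda>_. R"] by simp
    moreover have "elbo_core x off \<theta> \<psi> \<le> b"
      using b[OF that] abs_le_D1 by blast
    ultimately show ?thesis
      unfolding elbo_split by linarith
  qed
  ultimately show thesis
    using that by blast
qed

lemma bdd_above_elbo: "\<theta> \<in> \<Theta> \<Longrightarrow> bdd_above ((\<lambda>\<psi>. elbo x off y \<theta> \<psi>) ` \<Psi>)"
  using elbo_le_linear by (metis (no_types, lifting) bdd_aboveI2)

lemma profiled_le_linear:
  obtains a K where "a \<ge> 0" and "\<And>\<theta> y. \<theta> \<in> \<Theta> \<Longrightarrow>
    profiled \<Psi> x off \<theta> y \<le> a * count_sum y + K - (\<Sum>j\<in>UNIV. ln (fact (y$j)))"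
proof -
  obtain a K where "a \<ge> 0" and le: "\<And>\<theta> \<psi> y. \<theta> \<in> \<Theta> \<Longrightarrow> \<psi> \<in> \<Psi> \<Longrightarrow>
      elbo x off y \<theta> \<psi> \<le> a * count_sum y + K - (\<Sum>j\<in>UNIV. ln (fact (y$j)))"
    using elbo_le_linear by blast
  have "profiled \<Psi> x off \<theta> y \<le> a * count_sum y + K - (\<Sum>j\<in>UNIV. ln (fact (y$j)))"
    if "\<theta> \<in> \<Theta>" for \<theta> y
    unfolding profiled_def using \<Psi>_ne le that by (intro cSUP_least) auto
  then show thesis
    using that \<open>a \<ge> 0\<close> by blast
qed

lemma profiled_diff_le:
  assumes "\<theta> \<in> \<Theta>" "\<theta>' \<in> \<Theta>" and "e \<ge> 0"
    and core: "\<And>\<psi>. \<psi> \<in> \<Psi> \<Longrightarrow> \<bar>elbo_core x off \<theta> \<psi> - elbo_core x off \<theta>' \<psi>\<bar> \<le> e"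
    and xB: "\<And>j. \<bar>xB x (fst \<theta>) j - xB x (fst \<theta>') j\<bar> \<le> e"
  shows "\<bar>profiled \<Psi> x off \<theta> y - profiled \<Psi> x off \<theta>' y\<bar> \<le> e * (1 + count_sum y)"
  unfolding profiled_def
proof (rule abs_cSUP_diff_le[OF \<Psi>_ne bdd_above_elbo[OF assms(1)] bdd_above_elbo[OF assms(2)]])
  fix \<psi> assume "\<psi> \<in> \<Psi>"
  have "\<bar>\<Sum>j\<in>UNIV. real (y$j) * (xB x (fst \<theta>) j - xB x (fst \<theta>') j)\<bar> \<le> (\<Sum>j\<in>UNIV. real (y$j) * e)"
    using xB by (intro order_trans[OF sum_abs] sum_mono) (simp add: abs_mult mult_left_mono)
  also have "\<dots> = e * count_sum y"
    by (simp add: count_sum_def sum_distrib_left mult.commute)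
  finally have "\<bar>\<Sum>j\<in>UNIV. real (y$j) * (xB x (fst \<theta>) j - xB x (fst \<theta>') j)\<bar> \<le> e * count_sum y" .
  moreover have "elbo x off y \<theta> \<psi> - elbo x off y \<theta>' \<psi> = (\<Sum>j\<in>UNIV. real (y$j) * (xB x (fst \<theta>) j - xB x (fst \<theta>') j))
      + (elbo_core x off \<theta> \<psi> - elbo_core x off \<theta>' \<psi>)"
    unfolding elbo_split by (simp add: algebra_simps flip: sum_subtractf)
  ultimately show "\<bar>elbo x off y \<theta> \<psi> - elbo x off y \<theta>' \<psi>\<bar> \<le> e * (1 + count_sum y)"
    using core[OF \<open>\<psi> \<in> \<Psi>\<close>] by (simp add: algebra_simps)
qed

lemma profiled_uniform_modulus:
  assumes "e > 0"
  shows "\<exists>d>0. \<forall>\<theta>\<in>\<Theta>. \<forall>\<theta>'\<in>\<Theta>. dist \<theta> \<theta>' < d \<longrightarrow>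
    (\<forall>y. \<bar>profiled \<Psi> x off \<theta> y - profiled \<Psi> x off \<theta>' y\<bar> \<le> e * (1 + count_sum y))"
proof -
  obtain d where "d > 0" and d: "\<And>\<theta> \<theta>' \<psi> j. \<theta> \<in> \<Theta> \<Longrightarrow> \<theta>' \<in> \<Theta> \<Longrightarrow> \<psi> \<in> \<Psi> \<Longrightarrow> dist \<theta> \<theta>' < d \<Longrightarrow>
      \<bar>elbo_core x off \<theta> \<psi> - elbo_core x off \<theta>' \<psi>\<bar> \<le> e \<and> \<bar>xB x (fst \<theta>) j - xB x (fst \<theta>') j\<bar> \<le> e"
    using elbo_param_part_uniform_modulus[OF assms] by blast
  obtain \<psi> where "\<psi> \<in> \<Psi>"
    using \<Psi>_ne by blast
  show ?thesis
  proof (intro exI[of _ d] conjI ballI impI allI)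
    fix \<theta> \<theta>' y assume "\<theta> \<in> \<Theta>" "\<theta>' \<in> \<Theta>" "dist \<theta> \<theta>' < d"
    then show "\<bar>profiled \<Psi> x off \<theta> y - profiled \<Psi> x off \<theta>' y\<bar> \<le> e * (1 + count_sum y)"
      using d \<open>\<psi> \<in> \<Psi>\<close> \<open>e > 0\<close> by (intro profiled_diff_le) auto
  qed (fact \<open>d > 0\<close>)
qed

lemma profiled_diff_bounded:
  obtains C where "\<And>\<theta> \<theta>' y. \<theta> \<in> \<Theta> \<Longrightarrow> \<theta>' \<in> \<Theta> \<Longrightarrow>
    \<bar>profiled \<Psi> x off \<theta> y - profiled \<Psi> x off \<theta>' y\<bar> \<le> C * (1 + count_sum y)"
proof -
  obtain b where b: "\<And>\<theta> \<psi> j. \<theta> \<in> \<Theta> \<Longrightarrow> \<psi> \<in> \<Psi> \<Longrightarrow>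
      \<bar>elbo_core x off \<theta> \<psi>\<bar> \<le> b \<and> \<bar>xB x (fst \<theta>) j\<bar> \<le> b"
    using elbo_param_part_bounded by blast
  obtain \<psi> where "\<psi> \<in> \<Psi>"
    using \<Psi>_ne by blast
  have "\<bar>profiled \<Psi> x off \<theta> y - profiled \<Psi> x off \<theta>' y\<bar> \<le> 2 * \<bar>b\<bar> * (1 + count_sum y)"
    if "\<theta> \<in> \<Theta>" "\<theta>' \<in> \<Theta>" for \<theta> \<theta>' y
  proof (rule profiled_diff_le[OF that])
    show "\<bar>elbo_core x off \<theta> \<psi>' - elbo_core x off \<theta>' \<psi>'\<bar> \<le> 2 * \<bar>b\<bar>" if "\<psi>' \<in> \<Psi>" for \<psi>'
      using b[OF \<open>\<theta> \<in> \<Theta>\<close> that] b[OF \<open>\<theta>' \<in> \<Theta>\<close> that] by fastforce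
    show "\<bar>xB x (fst \<theta>) j - xB x (fst \<theta>') j\<bar> \<le> 2 * \<bar>b\<bar>" for j
      using b[OF \<open>\<theta> \<in> \<Theta>\<close> \<open>\<psi> \<in> \<Psi>\<close>, of j] b[OF \<open>\<theta>' \<in> \<Theta>\<close> \<open>\<psi> \<in> \<Psi>\<close>, of j] by arith
  qed simp
  then show thesis
    using that by blast
qed

text \<open>The term -sum_j ln y_j! of the ELBO outgrows every linear function of y.\<close>

lemma count_sum_le_profiled:
  assumes "\<theta> \<in> \<Theta>"
  obtains K where "\<And>y. 1 + count_sum y \<le> K + \<bar>profiled \<Psi> x off \<theta> y\<bar>"
proof -
  obtain a K where "a \<ge> 0" and le: "\<And>y. profiled \<Psi> x off \<theta> y \<le> a * count_sum y + K - (\<Sum>j\<in>UNIV. ln (fact (y$j)))"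
    using profiled_le_linear assms by metis
  have ln_fact: "(a + 1) * count_sum y - CARD('p) * exp (a + 1) \<le> (\<Sum>j\<in>UNIV. ln (fact (y$j)))"
    for y :: "nat^'p"
    using sum_mono[of UNIV "\<lambda>j. (a + 1) * real (y$j) - exp (a + 1)" "\<lambda>j. ln (fact (y$j))"]
    by (simp add: count_sum_def ln_fact_ge_linear sum_subtractf sum_distrib_left)
  have "1 + count_sum y \<le> (1 + K + CARD('p) * exp (a + 1)) + \<bar>profiled \<Psi> x off \<theta> y\<bar>" for y
    using le[of y] ln_fact[of y] abs_ge_minus_self[of "profiled \<Psi> x off \<theta> y"] \<open>a \<ge> 0\<close>
    by (simp add: algebra_simps)
  then show thesis
    using that by blast
qed

context
  fixes \<mu> :: "(nat^'p) measure"
  assumes finite_\<mu>: "finite_measure \<mu>" and sets_\<mu>: "sets \<mu> = sets (count_space UNIV)"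
begin

lemma borel_measurable_counts [measurable]: "h \<in> borel_measurable \<mu>"
  by (simp add: measurable_cong_sets[OF sets_\<mu> refl])

lemma integrable_count_sum:
  assumes "\<theta> \<in> \<Theta>" and "integrable \<mu> (profiled \<Psi> x off \<theta>)"
  shows "integrable \<mu> (\<lambda>y. 1 + count_sum y)"
proof -
  obtain K where K: "\<And>y. 1 + count_sum y \<le> K + \<bar>profiled \<Psi> x off \<theta> y\<bar>"
    using count_sum_le_profiled[OF assms(1)] by blast
  have int: "integrable \<mu> (\<lambda>y. K + \<bar>profiled \<Psi> x off \<theta> y\<bar>)"
    using assms(2) finite_measure.integrable_const[OF finite_\<mu>]
    by (intro Bochner_Integration.integrable_add integrable_abs)
  have "norm (1 + count_sum y) \<le> norm (K + \<bar>profiled \<Psi> x off \<theta> y\<bar>)" for y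
    using K[of y] sum_nonneg[of UNIV "\<lambda>j. real (y$j)"] by (simp add: count_sum_def)
  then show ?thesis
    by (intro Bochner_Integration.integrable_bound[OF int] AE_I2) simp_all
qed

lemma integrable_profiled:
  assumes "\<theta>\<^sub>0 \<in> \<Theta>" and "integrable \<mu> (profiled \<Psi> x off \<theta>\<^sub>0)" and "\<theta> \<in> \<Theta>"
  shows "integrable \<mu> (profiled \<Psi> x off \<theta>)"
proof -
  obtain C where C: "\<And>y. \<bar>profiled \<Psi> x off \<theta> y - profiled \<Psi> x off \<theta>\<^sub>0 y\<bar> \<le> C * (1 + count_sum y)"
    using profiled_diff_bounded assms by metis
  have int: "integrable \<mu> (\<lambda>y. \<bar>profiled \<Psi> x off \<theta>\<^sub>0 y\<bar> + C * (1 + count_sum y))"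
    using assms(2) integrable_count_sum[OF assms(1,2)] by simp
  have "norm (profiled \<Psi> x off \<theta> y) \<le> norm (\<bar>profiled \<Psi> x off \<theta>\<^sub>0 y\<bar> + C * (1 + count_sum y))" for y
    using C[of y] by simp
  then show ?thesis
    by (intro Bochner_Integration.integrable_bound[OF int] AE_I2) simp_all
qed

end

lemma m_estimation_profiled:
  assumes "iid_sample M (count_space UNIV) \<mu> Y"
    and "\<theta>\<^sub>0 \<in> \<Theta>" and "integrable \<mu> (profiled \<Psi> x off \<theta>\<^sub>0)"
  shows "m_estimation M (count_space UNIV) \<mu> Y \<Theta> (profiled \<Psi> x off) (\<lambda>y. 1 + count_sum y)"
proof -
  interpret iid_sample M "count_space UNIV" \<mu> Y
    by (rule assms(1))
  have law: "finite_measure \<mu>" "sets \<mu> = sets (count_space UNIV)"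
    using prob_space_law sets_law by (auto simp: prob_space_def)
  have "0 \<le> 1 + count_sum y" for y
    using count_sum_nonneg[of y] by linarith
  then show ?thesis
    unfolding m_estimation_def m_estimation_axioms_def
    using assms(1) compact_\<Theta> integrable_profiled[OF law assms(2,3)] integrable_count_sum[OF law assms(2,3)]
      profiled_uniform_modulus
    by blast
qed

end

theorem theorem1:
  fixes \<Theta> :: "((real^'p::finite^'m::finite) \<times> (real^'p^'p)) set"
    and \<Psi> :: "((real^'p) \<times> (real^'p)) set"
    and x :: "real^'m" and off :: "real^'p"
    and \<theta>star \<theta>bar :: "(real^'p^'m) \<times> (real^'p^'p)"
    and M :: "'w measure"
    and Y :: "nat \<Rightarrow> 'w \<Rightarrow> nat^'p"
    and \<theta>hat :: "nat \<Rightarrow> 'w \<Rightarrow> (real^'p^'m) \<times> (real^'p^'p)"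
  assumes Theta_params: "\<Theta> \<subseteq> {\<theta>. sym_posdef (snd \<theta>)}"
    and A1: "compact \<Theta>"
    and Psi_sub: "\<Psi> \<subseteq> {\<psi>. \<forall>j. snd \<psi> $ j > 0}"
    and Psi_ne: "\<Psi> \<noteq> {}"
    and A2: "bounded \<Psi>"
    and star_in: "\<theta>star \<in> \<Theta>"
    and P: "prob_space M"
    and indep: "prob_space.indep_vars M (\<lambda>_. count_space UNIV) Y UNIV"
    and law: "\<And>i. distr M (count_space UNIV) (Y i) = pln_measure \<theta>star x off"
    and bar_in: "\<theta>bar \<in> \<Theta>"
    and bar_max: "\<And>\<theta>. \<theta> \<in> \<Theta> \<Longrightarrow> \<theta> \<noteq> \<theta>bar \<Longrightarrow>
        (\<integral>y. profiled \<Psi> x off \<theta> y \<partial>pln_measure \<theta>star x off)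
          < (\<integral>y. profiled \<Psi> x off \<theta>bar y \<partial>pln_measure \<theta>star x off)"
    and hat_meas: "\<And>n. \<theta>hat n \<in> borel_measurable M"
    and hat_in: "\<And>n \<omega>. n \<ge> 1 \<Longrightarrow> \<omega> \<in> space M \<Longrightarrow> \<theta>hat n \<omega> \<in> \<Theta>"
    and hat_max: "\<And>n \<omega> \<theta>. n \<ge> 1 \<Longrightarrow> \<omega> \<in> space M \<Longrightarrow> \<theta> \<in> \<Theta> \<Longrightarrow>
        (\<Sum>i<n. profiled \<Psi> x off \<theta> (Y i \<omega>)) / real n
          \<le> (\<Sum>i<n. profiled \<Psi> x off (\<theta>hat n \<omega>) (Y i \<omega>)) / real n"
  shows "\<And>\<epsilon>. \<epsilon> > 0 \<Longrightarrow>
     (\<lambda>n. measure M {\<omega> \<in> space M. dist (\<theta>hat n \<omega>) \<theta>bar > \<epsilon>}) \<longlonglongrightarrow> 0"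
proof -
  fix \<epsilon> :: real assume "\<epsilon> > 0"
  note PLN_setting = Theta_params A1 Psi_sub Psi_ne A2
  have iid: "iid_sample M (count_space UNIV) (pln_measure \<theta>star x off) Y"
    using P indep law by (simp add: iid_sample_def iid_sample_axioms_def)
  show "(\<lambda>n. measure M {\<omega> \<in> space M. dist (\<theta>hat n \<omega>) \<theta>bar > \<epsilon>}) \<longlonglongrightarrow> 0"
  proof (cases "\<Theta> = {\<theta>bar}")
    case True
    then have "{\<omega> \<in> space M. dist (\<theta>hat n \<omega>) \<theta>bar > \<epsilon>} = {}" if "n \<ge> 1" for n
      using hat_in[OF that] \<open>\<epsilon> > 0\<close> by auto
    then have "\<forall>\<^sub>F n in sequentially. measure M {\<omega> \<in> space M. dist (\<theta>hat n \<omega>) \<theta>bar > \<epsilon>} = 0"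
      by (intro eventually_sequentiallyI[of 1]) (simp only: measure_empty)
    then show ?thesis
      by (rule tendsto_eventually)
  next
    case False
    then obtain \<theta> where "\<theta> \<in> \<Theta>" "\<theta> \<noteq> \<theta>bar"
      using bar_in by blast
    txt \<open>A non-integrable function has Bochner integral 0, so the strict inequality of
      bar_max forces some profiled objective to be integrable.\<close>
    then obtain \<theta>\<^sub>0 where "\<theta>\<^sub>0 \<in> \<Theta>" "integrable (pln_measure \<theta>star x off) (profiled \<Psi> x off \<theta>\<^sub>0)"
      using bar_max bar_in not_integrable_integral_eq by (metis less_irrefl)
    then interpret m_estimation M "count_space UNIV" "pln_measure \<theta>star x off" Y \<Theta> "profiled \<Psi> x off"
      "\<lambda>y. 1 + count_sum y"
      by (rule m_estimation_profiled[OF PLN_setting iid])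
    show ?thesis
      using argmax_consistent[OF bar_in _ hat_meas hat_in _ \<open>\<epsilon> > 0\<close>] bar_max hat_max
      by (simp add: expected_criterion_def sample_mean_def)
  qed
qed

end
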